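(* Let $\mathcal{S}$ be a finite state space with non-terminal states $\mathcal{S}_N$ and reward function $r:\mathcal{S}\to\mathbb{R}$ with $r(s)<0$ for $s\in\mathcal{S}_N$, and let $\lambda>0$. Assume there is exactly one start state $s_0$. Let $\mathcal{D}$ be a dataset of transitions $(s,a,r,s')$ collected by an agent starting from $s_0$ and following the default policy $\pi_d$, stored in the order in which they were collected, and let $\mathcal{S}_V$ be the set of states visited in $\mathcal{D}$. Initialize $\mathbf{Z}\in\mathbb{R}^{|\mathcal{S}|\times|\mathcal{S}|}$ as the identity matrix, and learn it by the temporal-difference update: for a transition $(s,a,r,s')$ and for all $j\in\mathcal{S}$, $\mathbf{Z}(s,j)\leftarrow\mathbf{Z}(s,j)+\alpha\,[Y-\mathbf{Z}(s,j)]$, where $Y=\exp(r/\lambda)\big(\mathbb{1}_{\{s=j\}}+\mathbf{Z}(s',j)\big)$ if $s$ is non-terminal and $Y=\exp(r/\lambda)\mathbb{1}_{\{s=j\}}$ if $s$ is terminal, with step size $\alpha\in(0,1)$. Then, after one backward sweep through $\mathcal{D}$ (applying this update to the transitions in reverse order of collection), the top eigenvector (eigenvector of the largest eigenvalue) of $\operatorname{Sym}(\mathbf{Z}_{VV})=(\mathbf{Z}_{VV}+\mathbf{Z}_{VV}^\top)/2$ is positive, where $\mathbf{Z}_{VV}$ is the submatrix of $\mathbf{Z}$ with rows and columns indexed by $\mathcal{S}_V$.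
   Context: The default policy $\pi_d$ assigns nonzero probability to all state-action pairs; $r$ in a transition denotes the reward $r(s)$ received at state $s$. "Positive" for an eigenvector means it can be chosen with all entries positive. *)

theory Defs
  imports Complex_Main
begin

type_synonym ('s, 'act) transition = "'s \<times> 'act \<times> real \<times> 's"

definition tr_src :: "('s, 'act) transition \<Rightarrow> 's" where
  "tr_src t = fst t"
definition tr_act :: "('s, 'act) transition \<Rightarrow> 'act" where
  "tr_act t = fst (snd t)"
definition tr_rew :: "('s, 'act) transition \<Rightarrow> real" where
  "tr_rew t = fst (snd (snd t))"
definition tr_dst :: "('s, 'act) transition \<Rightarrow> 's" where
  "tr_dst t = snd (snd (snd t))"

text \<open>Episodic data collection from the unique start state s0 (in order of collection):
  the first transition starts at s0; from a non-terminal state the agent continues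
  from the observed next state, except that an episode ends (and the next transition
  restarts at s0) when a terminal state is reached; a transition out of a terminal
  state is the reset transition, whose next state is s0.\<close>
definition collected_from :: "'s \<Rightarrow> 's set \<Rightarrow> ('s \<Rightarrow> real) \<Rightarrow> ('s, 'act) transition list \<Rightarrow> bool" where
  "collected_from s0 SN r D \<longleftrightarrow>
     D \<noteq> [] \<and> tr_src (D ! 0) = s0 \<and>
     (\<forall>k < length D. tr_rew (D ! k) = r (tr_src (D ! k))) \<and>
     (\<forall>k < length D. tr_src (D ! k) \<notin> SN \<longrightarrow> tr_dst (D ! k) = s0) \<and>
     (\<forall>k. Suc k < length D \<longrightarrow>
        tr_src (D ! Suc k) = tr_dst (D ! k) \<or>
        (tr_dst (D ! k) \<notin> SN \<and> tr_src (D ! Suc k) = s0))"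

definition visited_states :: "('s, 'act) transition list \<Rightarrow> 's set" where
  "visited_states D = tr_src ` set D \<union> tr_dst ` set D"

definition td_target :: "'s set \<Rightarrow> real \<Rightarrow> ('s \<Rightarrow> 's \<Rightarrow> real) \<Rightarrow> ('s, 'act) transition \<Rightarrow> 's \<Rightarrow> real" where
  "td_target SN lam Z t j =
     (if tr_src t \<in> SN
      then exp (tr_rew t / lam) * ((if tr_src t = j then 1 else 0) + Z (tr_dst t) j)
      else exp (tr_rew t / lam) * (if tr_src t = j then 1 else 0))"

definition td_update :: "'s set \<Rightarrow> real \<Rightarrow> real \<Rightarrow> ('s \<Rightarrow> 's \<Rightarrow> real) \<Rightarrow> ('s, 'act) transition \<Rightarrow> ('s \<Rightarrow> 's \<Rightarrow> real)" where
  "td_update SN lam \<alpha> Z t =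
     (\<lambda>i j. if i = tr_src t then Z i j + \<alpha> * (td_target SN lam Z t j - Z i j) else Z i j)"

definition id_mat :: "'s \<Rightarrow> 's \<Rightarrow> real" where
  "id_mat i j = (if i = j then 1 else 0)"

definition backward_sweep :: "'s set \<Rightarrow> real \<Rightarrow> real \<Rightarrow> ('s, 'act) transition list \<Rightarrow> ('s \<Rightarrow> 's \<Rightarrow> real)" where
  "backward_sweep SN lam \<alpha> D = fold (\<lambda>t Z. td_update SN lam \<alpha> Z t) (rev D) id_mat"

definition sym_mat :: "('s \<Rightarrow> 's \<Rightarrow> real) \<Rightarrow> 's \<Rightarrow> 's \<Rightarrow> real" where
  "sym_mat M i j = (M i j + M j i) / 2"

definition is_eigenpair_on :: "'s set \<Rightarrow> ('s \<Rightarrow> 's \<Rightarrow> real) \<Rightarrow> real \<Rightarrow> ('s \<Rightarrow> real) \<Rightarrow> bool" where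
  "is_eigenpair_on V M \<mu> v \<longleftrightarrow>
     (\<exists>i\<in>V. v i \<noteq> 0) \<and> (\<forall>i\<in>V. (\<Sum>j\<in>V. M i j * v j) = \<mu> * v i)"

definition eigenvalue_on :: "'s set \<Rightarrow> ('s \<Rightarrow> 's \<Rightarrow> real) \<Rightarrow> real \<Rightarrow> bool" where
  "eigenvalue_on V M \<mu> \<longleftrightarrow> (\<exists>v. is_eigenpair_on V M \<mu> v)"

definition is_top_eigenpair_on :: "'s set \<Rightarrow> ('s \<Rightarrow> 's \<Rightarrow> real) \<Rightarrow> real \<Rightarrow> ('s \<Rightarrow> real) \<Rightarrow> bool" where
  "is_top_eigenpair_on V M \<mu> v \<longleftrightarrow>
     is_eigenpair_on V M \<mu> v \<and> (\<forall>\<mu>'. eigenvalue_on V M \<mu>' \<longrightarrow> \<mu>' \<le> \<mu>)"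

end

theory Submission
  imports Defs "HOL-Analysis.Analysis"
begin

text \<open>
  A TD update keeps Z entrywise nonnegative with positive diagonal, never destroys a
  positive entry, and makes Z(s, s') positive for every non-terminal transition (s, a, r, s'),
  because its target then contains the term exp (r / \<lambda>) Z(s', s') > 0.  Hence Sym(Z_VV) is a
  nonnegative symmetric matrix in which every visited state is linked to s0 by a chain of
  positive entries.  A maximiser of the Rayleigh quotient is a top eigenvector, and since the
  matrix is nonnegative its entrywise absolute value is again one.  The zero set of a
  nonnegative eigenvector is closed under positive entries, so by connectedness it is empty.
\<close>

definition quad_form_on :: "'s set \<Rightarrow> ('s \<Rightarrow> 's \<Rightarrow> real) \<Rightarrow> ('s \<Rightarrow> real) \<Rightarrow> real" where
  "quad_form_on V A x = (\<Sum>i\<in>V. x i * (\<Sum>j\<in>V. A i j * x j))"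

definition sqnorm_on :: "'s set \<Rightarrow> ('s \<Rightarrow> real) \<Rightarrow> real" where
  "sqnorm_on V x = (\<Sum>i\<in>V. (x i)\<^sup>2)"

lemma sqnorm_on_pos:
  assumes "finite V" "i \<in> V" "x i \<noteq> 0"
  shows "0 < sqnorm_on V x"
proof -
  have "(x i)\<^sup>2 \<le> sqnorm_on V x"
    unfolding sqnorm_on_def using assms by (intro member_le_sum) auto
  moreover have "0 < (x i)\<^sup>2" using assms(3) by simp
  ultimately show ?thesis by linarith
qed

lemma sqnorm_on_eq_0_iff:
  assumes "finite V"
  shows "sqnorm_on V x = 0 \<longleftrightarrow> (\<forall>i\<in>V. x i = 0)"
  unfolding sqnorm_on_def using assms by (simp add: sum_nonneg_eq_0_iff)

lemma quad_form_on_add_scaled: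
  assumes sym: "\<And>i j. i \<in> V \<Longrightarrow> j \<in> V \<Longrightarrow> A i j = A j i"
  shows "quad_form_on V A (\<lambda>i. v i + t * y i) =
           quad_form_on V A v + 2 * t * (\<Sum>i\<in>V. y i * (\<Sum>j\<in>V. A i j * v j))
           + t\<^sup>2 * quad_form_on V A y"
proof -
  have swap: "(\<Sum>i\<in>V. v i * (\<Sum>j\<in>V. A i j * y j)) = (\<Sum>i\<in>V. y i * (\<Sum>j\<in>V. A i j * v j))"
    unfolding sum_distrib_left by (subst sum.swap) (auto intro!: sum.cong simp: sym)
  have "quad_form_on V A (\<lambda>i. v i + t * y i) =
          quad_form_on V A v + t * (\<Sum>i\<in>V. v i * (\<Sum>j\<in>V. A i j * y j))
          + t * (\<Sum>i\<in>V. y i * (\<Sum>j\<in>V. A i j * v j)) + t\<^sup>2 * quad_form_on V A y"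
    unfolding quad_form_on_def
    by (simp add: algebra_simps power2_eq_square sum.distrib sum_distrib_left)
  then show ?thesis by (simp add: swap)
qed

lemma sqnorm_on_add_scaled:
  "sqnorm_on V (\<lambda>i. v i + t * y i) =
     sqnorm_on V v + 2 * t * (\<Sum>i\<in>V. v i * y i) + t\<^sup>2 * sqnorm_on V y"
  unfolding sqnorm_on_def
  by (simp add: algebra_simps power2_eq_square sum.distrib sum_distrib_left)

lemma nonneg_quadratic_linear_coeff_zero:
  fixes a b :: real
  assumes "\<And>t. 0 \<le> 2 * t * b + t\<^sup>2 * a"
  shows "b = 0"
proof (rule ccontr)
  assume "b \<noteq> 0"
  define c where "c = \<bar>a\<bar> + 1"
  have "0 < c" "a < 2 * c" unfolding c_def by auto
  define t where "t = - b / c"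
  have "2 * t * b + t\<^sup>2 * a = b\<^sup>2 * (a - 2 * c) / c\<^sup>2"
    using \<open>0 < c\<close> unfolding t_def by (simp add: field_simps power2_eq_square)
  also have "\<dots> < 0"
    using \<open>b \<noteq> 0\<close> \<open>0 < c\<close> \<open>a < 2 * c\<close> by (intro divide_neg_pos mult_pos_neg) auto
  finally show False using assms[of t] by simp
qed

lemma compact_unit_sphere_on:
  fixes V :: "'s::finite set"
  shows "compact {x::real^'s. (\<forall>i. i \<notin> V \<longrightarrow> x$i = 0) \<and> sqnorm_on V (\<lambda>i. x$i) = 1}"
    (is "compact ?S")
proof (rule compact_eq_bounded_closed[THEN iffD2], rule conjI)
  have "norm x = 1" if "x \<in> ?S" for x
  proof -
    have "inner x x = (\<Sum>i\<in>UNIV. (x$i)\<^sup>2)"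
      by (simp add: inner_vec_def power2_eq_square)
    also have "\<dots> = sqnorm_on V (\<lambda>i. x$i)"
      unfolding sqnorm_on_def using that by (intro sum.mono_neutral_right) auto
    finally show ?thesis using that by (simp add: norm_eq_1)
  qed
  then show "bounded ?S" unfolding bounded_iff by (intro exI[of _ 1]) auto
  show "closed ?S"
    unfolding sqnorm_on_def
    by (intro closed_Collect_conj closed_Collect_all closed_Collect_imp closed_Collect_eq
        continuous_intros) auto
qed

lemma rayleigh_max_exists:
  fixes A :: "'s::finite \<Rightarrow> 's \<Rightarrow> real"
  assumes "V \<noteq> {}"
  obtains M x where "sqnorm_on V x = 1" "quad_form_on V A x = M"
    "\<And>y. quad_form_on V A y \<le> M * sqnorm_on V y"
proof -
  define S where "S = {x::real^'s. (\<forall>i. i \<notin> V \<longrightarrow> x$i = 0) \<and> sqnorm_on V (\<lambda>i. x$i) = 1}"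
  define f where "f x = quad_form_on V A (\<lambda>i. x$i)" for x :: "real^'s"
  have "finite V" by simp
  obtain i0 where "i0 \<in> V" using assms by auto
  then have "(\<chi> i. if i = i0 then 1 else 0) \<in> S"
    unfolding S_def sqnorm_on_def by (simp add: if_distrib[of "\<lambda>x. x\<^sup>2"] cong: if_cong)
  moreover have "continuous_on S f"
    unfolding f_def quad_form_on_def by (intro continuous_intros)
  ultimately obtain x where xS: "x \<in> S" and xmax: "\<And>z. z \<in> S \<Longrightarrow> f z \<le> f x"
    using continuous_attains_sup[OF compact_unit_sphere_on[of V, folded S_def]] by blast
  have "quad_form_on V A y \<le> f x * sqnorm_on V y" for y
  proof (cases "\<forall>i\<in>V. y i = 0")
    case True
    then show ?thesis by (simp add: quad_form_on_def sqnorm_on_def)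
  next
    case False
    then have pos: "0 < sqnorm_on V y" using sqnorm_on_pos[OF \<open>finite V\<close>] by blast
    define c where "c = 1 / sqrt (sqnorm_on V y)"
    have c2: "c\<^sup>2 = 1 / sqnorm_on V y"
      using pos unfolding c_def by (simp add: power_divide)
    define z where "z = (\<chi> i. if i \<in> V then c * y i else 0)"
    have z: "(\<lambda>i. z$i) = (\<lambda>i. if i \<in> V then c * y i else 0)"
      unfolding z_def by simp
    have "sqnorm_on V (\<lambda>i. z$i) = c\<^sup>2 * sqnorm_on V y"
      unfolding z sqnorm_on_def by (simp add: sum_distrib_left power_mult_distrib)
    moreover have "\<forall>i. i \<notin> V \<longrightarrow> z$i = 0" by (simp add: z_def)
    ultimately have "z \<in> S" using c2 pos unfolding S_def by simp
    then have "f z \<le> f x" by (rule xmax)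
    moreover have "f z = c\<^sup>2 * quad_form_on V A y"
      unfolding f_def quad_form_on_def z_def
      by (simp add: sum_distrib_left power2_eq_square algebra_simps)
    ultimately have "quad_form_on V A y / sqnorm_on V y \<le> f x"
      using c2 by simp
    then show ?thesis
      using pos by (simp add: pos_divide_le_eq mult.commute)
  qed
  moreover have "sqnorm_on V (\<lambda>i. x$i) = 1" using xS unfolding S_def by simp
  ultimately show thesis using that[of "\<lambda>i. x$i" "f x"] by (simp add: f_def)
qed

lemma rayleigh_maximiser_eigenvector:
  assumes "finite V"
    and sym: "\<And>i j. i \<in> V \<Longrightarrow> j \<in> V \<Longrightarrow> A i j = A j i"
    and bound: "\<And>y. quad_form_on V A y \<le> M * sqnorm_on V y"
    and attained: "quad_form_on V A v = M * sqnorm_on V v"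
  shows "\<forall>i\<in>V. (\<Sum>j\<in>V. A i j * v j) = M * v i"
proof -
  \<comment> \<open>v minimises the nonnegative form gap, so its derivative at v vanishes in every
    direction; in the direction of the residual w it is twice the squared norm of w.\<close>
  define w where "w i = M * v i - (\<Sum>j\<in>V. A i j * v j)" for i
  define gap where "gap y = M * sqnorm_on V y - quad_form_on V A y" for y
  define P where "P = (\<Sum>i\<in>V. v i * w i)"
  define L where "L = (\<Sum>i\<in>V. w i * (\<Sum>j\<in>V. A i j * v j))"
  have "sqnorm_on V w = (\<Sum>i\<in>V. w i * (M * v i - (\<Sum>j\<in>V. A i j * v j)))"
    by (simp add: sqnorm_on_def power2_eq_square w_def)
  also have "\<dots> = M * P - L"
    unfolding P_def L_def by (simp add: algebra_simps sum_subtractf sum_distrib_left)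
  finally have w: "sqnorm_on V w = M * P - L" .
  have q: "quad_form_on V A (\<lambda>i. v i + t * w i) =
      quad_form_on V A v + 2 * t * L + t\<^sup>2 * quad_form_on V A w" for t
    unfolding L_def by (rule quad_form_on_add_scaled[OF sym])
  have s: "sqnorm_on V (\<lambda>i. v i + t * w i) = sqnorm_on V v + 2 * t * P + t\<^sup>2 * sqnorm_on V w" for t
    unfolding P_def by (rule sqnorm_on_add_scaled)
  have "gap (\<lambda>i. v i + t * w i) = gap v + 2 * t * (M * P - L) + t\<^sup>2 * gap w" for t
    unfolding gap_def q s by (simp add: algebra_simps)
  moreover have "gap v = 0" using attained by (simp add: gap_def)
  ultimately have expand: "gap (\<lambda>i. v i + t * w i) = 2 * t * sqnorm_on V w + t\<^sup>2 * gap w" for t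
    by (simp add: w)
  have "0 \<le> gap y" for y using bound[of y] by (simp add: gap_def)
  then have "0 \<le> 2 * t * sqnorm_on V w + t\<^sup>2 * gap w" for t
    by (simp only: expand[symmetric])
  then have "sqnorm_on V w = 0" by (rule nonneg_quadratic_linear_coeff_zero)
  then show ?thesis using \<open>finite V\<close> by (simp add: sqnorm_on_eq_0_iff w_def)
qed

lemma eigenvalue_le_rayleigh_bound:
  assumes "finite V"
    and bound: "\<And>y. quad_form_on V A y \<le> M * sqnorm_on V y"
    and "eigenvalue_on V A \<mu>"
  shows "\<mu> \<le> M"
proof -
  obtain u k where "k \<in> V" "u k \<noteq> 0" and eig: "\<forall>i\<in>V. (\<Sum>j\<in>V. A i j * u j) = \<mu> * u i"
    using assms(3) unfolding eigenvalue_on_def is_eigenpair_on_def by blast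
  then have pos: "0 < sqnorm_on V u" using sqnorm_on_pos[OF \<open>finite V\<close>] by blast
  have "quad_form_on V A u = \<mu> * sqnorm_on V u"
    unfolding quad_form_on_def sqnorm_on_def using eig
    by (simp add: sum_distrib_left power2_eq_square algebra_simps)
  then show ?thesis using bound[of u] pos by simp
qed

lemma nonneg_symmetric_top_eigenpair:
  fixes A :: "'s::finite \<Rightarrow> 's \<Rightarrow> real"
  assumes "V \<noteq> {}"
    and sym: "\<And>i j. i \<in> V \<Longrightarrow> j \<in> V \<Longrightarrow> A i j = A j i"
    and nonneg: "\<And>i j. i \<in> V \<Longrightarrow> j \<in> V \<Longrightarrow> 0 \<le> A i j"
  obtains \<mu> v where "is_top_eigenpair_on V A \<mu> v" "\<forall>i\<in>V. 0 \<le> v i"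
proof -
  obtain M x where x: "sqnorm_on V x = 1" "quad_form_on V A x = M"
    and bound: "\<And>y. quad_form_on V A y \<le> M * sqnorm_on V y"
    using rayleigh_max_exists[OF \<open>V \<noteq> {}\<close>] by metis
  define v where "v i = \<bar>x i\<bar>" for i
  have v1: "sqnorm_on V v = 1" using x(1) by (simp add: sqnorm_on_def v_def)
  have "quad_form_on V A x \<le> quad_form_on V A v"
    unfolding quad_form_on_def v_def sum_distrib_left
    by (intro sum_mono) (auto simp: nonneg abs_mult mult.assoc intro: order_trans[OF abs_ge_self])
  then have "quad_form_on V A v = M * sqnorm_on V v"
    using bound[of v] x(2) v1 by simp
  then have "\<forall>i\<in>V. (\<Sum>j\<in>V. A i j * v j) = M * v i"
    using rayleigh_maximiser_eigenvector[OF _ sym bound] by simp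
  moreover have "\<exists>i\<in>V. v i \<noteq> 0"
    using v1 sqnorm_on_eq_0_iff[of V v] by simp
  moreover have "\<mu> \<le> M" if "eigenvalue_on V A \<mu>" for \<mu>
    using eigenvalue_le_rayleigh_bound[OF _ bound that] by simp
  ultimately have "is_top_eigenpair_on V A M v"
    unfolding is_top_eigenpair_on_def is_eigenpair_on_def by blast
  then show thesis using that v_def by simp
qed

lemma nonneg_eigenvector_zero_propagates:
  fixes A :: "'s \<Rightarrow> 's \<Rightarrow> real"
  assumes "finite V"
    and nonneg: "\<And>i j. i \<in> V \<Longrightarrow> j \<in> V \<Longrightarrow> 0 \<le> A i j"
    and v_nonneg: "\<forall>i\<in>V. 0 \<le> v i"
    and eig: "\<forall>i\<in>V. (\<Sum>j\<in>V. A i j * v j) = \<mu> * v i"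
    and "i \<in> V" "j \<in> V" "v i = 0" "0 < A i j"
  shows "v j = 0"
proof -
  have "(\<Sum>k\<in>V. A i k * v k) = 0" using eig \<open>i \<in> V\<close> \<open>v i = 0\<close> by simp
  then have "A i j * v j = 0"
    using \<open>finite V\<close> \<open>i \<in> V\<close> \<open>j \<in> V\<close> nonneg v_nonneg by (simp add: sum_nonneg_eq_0_iff)
  then show ?thesis using \<open>0 < A i j\<close> by simp
qed

text \<open>
  Connectedness of the graph of positive entries is phrased as an induction principle: every
  set containing i0 and closed under positive entries contains V.
\<close>

lemma nonneg_eigenvector_pos_if_connected:
  fixes A :: "'s \<Rightarrow> 's \<Rightarrow> real"
  assumes "finite V"
    and sym: "\<And>i j. i \<in> V \<Longrightarrow> j \<in> V \<Longrightarrow> A i j = A j i"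
    and nonneg: "\<And>i j. i \<in> V \<Longrightarrow> j \<in> V \<Longrightarrow> 0 \<le> A i j"
    and v_nonneg: "\<forall>i\<in>V. 0 \<le> v i"
    and eig: "\<forall>i\<in>V. (\<Sum>j\<in>V. A i j * v j) = \<mu> * v i"
    and nonzero: "\<exists>i\<in>V. v i \<noteq> 0"
    and "i0 \<in> V"
    and connected: "\<And>W. i0 \<in> W \<Longrightarrow> (\<And>i j. i \<in> W \<Longrightarrow> j \<in> V \<Longrightarrow> 0 < A i j \<Longrightarrow> j \<in> W)
                      \<Longrightarrow> V \<subseteq> W"
  shows "\<forall>i\<in>V. 0 < v i"
proof -
  note zero = nonneg_eigenvector_zero_propagates[OF \<open>finite V\<close> nonneg v_nonneg eig]
  have "v i0 \<noteq> 0"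
  proof
    assume "v i0 = 0"
    have "V \<subseteq> {i\<in>V. v i = 0}"
    proof (rule connected)
      show "i0 \<in> {i\<in>V. v i = 0}" using \<open>i0 \<in> V\<close> \<open>v i0 = 0\<close> by simp
      show "j \<in> {i\<in>V. v i = 0}" if "i \<in> {i\<in>V. v i = 0}" "j \<in> V" "0 < A i j" for i j
        using zero[of i j] that by simp
    qed
    then show False using nonzero by auto
  qed
  have pos_closed: "0 < v j" if "i \<in> V" "0 < v i" "j \<in> V" "0 < A i j" for i j
  proof -
    have "v j \<noteq> 0"
    proof
      assume "v j = 0"
      then have "v i = 0" using zero[of j i] sym[of i j] that by simp
      then show False using \<open>0 < v i\<close> by simp
    qed
    then show ?thesis using v_nonneg \<open>j \<in> V\<close> by (simp add: order_less_le)
  qed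
  have "V \<subseteq> {i\<in>V. 0 < v i}"
  proof (rule connected)
    show "i0 \<in> {i\<in>V. 0 < v i}"
      using \<open>i0 \<in> V\<close> \<open>v i0 \<noteq> 0\<close> v_nonneg by (simp add: order_less_le)
    show "j \<in> {i\<in>V. 0 < v i}" if "i \<in> {i\<in>V. 0 < v i}" "j \<in> V" "0 < A i j" for i j
      using pos_closed[of i j] that by simp
  qed
  then show ?thesis by auto
qed

lemma step_towards_nonneg:
  fixes \<alpha> z y :: real
  assumes "0 < \<alpha>" "\<alpha> < 1" "0 \<le> z" "0 \<le> y"
  shows "0 \<le> z + \<alpha> * (y - z)"
proof -
  have "z + \<alpha> * (y - z) = (1 - \<alpha>) * z + \<alpha> * y" by algebra
  then show ?thesis using assms by simp
qed

lemma step_towards_pos: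
  fixes \<alpha> z y :: real
  assumes "0 < \<alpha>" "\<alpha> < 1" "0 \<le> z" "0 \<le> y" "0 < z \<or> 0 < y"
  shows "0 < z + \<alpha> * (y - z)"
proof -
  have "z + \<alpha> * (y - z) = (1 - \<alpha>) * z + \<alpha> * y" by algebra
  moreover have "0 < (1 - \<alpha>) * z \<or> 0 < \<alpha> * y" "0 \<le> (1 - \<alpha>) * z" "0 \<le> \<alpha> * y"
    using assms by auto
  ultimately show ?thesis by linarith
qed

definition nonneg_pos_diag :: "('s \<Rightarrow> 's \<Rightarrow> real) \<Rightarrow> bool" where
  "nonneg_pos_diag Z \<longleftrightarrow> (\<forall>i j. 0 \<le> Z i j) \<and> (\<forall>i. 0 < Z i i)"

lemma nonneg_pos_diag_id_mat: "nonneg_pos_diag id_mat"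
  unfolding nonneg_pos_diag_def id_mat_def by simp

lemma td_target_nonneg:
  "(\<And>i j. 0 \<le> Z i j) \<Longrightarrow> 0 \<le> td_target SN lam Z t j"
  unfolding td_target_def by simp

lemma td_target_src_dst_pos:
  "nonneg_pos_diag Z \<Longrightarrow> tr_src t \<in> SN \<Longrightarrow> 0 < td_target SN lam Z t (tr_dst t)"
  unfolding nonneg_pos_diag_def td_target_def by (simp add: add_nonneg_pos)

context
  fixes SN :: "'s set" and lam \<alpha> :: real
  assumes alpha: "0 < \<alpha>" "\<alpha> < 1"
begin

lemma td_update_nonneg_pos_diag:
  assumes "nonneg_pos_diag Z"
  shows "nonneg_pos_diag (td_update SN lam \<alpha> Z t)"
proof -
  have Z: "0 \<le> Z i j" "0 < Z i i" for i j using assms unfolding nonneg_pos_diag_def by auto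
  have T: "0 \<le> td_target SN lam Z t j" for j by (rule td_target_nonneg) (rule Z(1))
  have "0 \<le> td_update SN lam \<alpha> Z t i j" for i j
    unfolding td_update_def using step_towards_nonneg[OF alpha Z(1) T] Z(1) by simp
  moreover have "0 < td_update SN lam \<alpha> Z t i i" for i
    unfolding td_update_def using step_towards_pos[OF alpha Z(1) T] Z(2) by simp
  ultimately show ?thesis unfolding nonneg_pos_diag_def by blast
qed

lemma td_update_pos:
  assumes "nonneg_pos_diag Z" "0 < Z i j"
  shows "0 < td_update SN lam \<alpha> Z t i j"
proof -
  have Z: "0 \<le> Z i j" for i j using assms unfolding nonneg_pos_diag_def by auto
  have T: "0 \<le> td_target SN lam Z t j" for j by (rule td_target_nonneg) (rule Z)
  show ?thesis
    unfolding td_update_def using step_towards_pos[OF alpha Z[of i j] T[of j]] assms(2)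
    by (cases "i = tr_src t") simp_all
qed

lemma td_update_src_dst_pos:
  assumes "nonneg_pos_diag Z" "tr_src t \<in> SN"
  shows "0 < td_update SN lam \<alpha> Z t (tr_src t) (tr_dst t)"
proof -
  have Z: "0 \<le> Z i j" for i j using assms unfolding nonneg_pos_diag_def by auto
  have T: "0 \<le> td_target SN lam Z t j" for j by (rule td_target_nonneg) (rule Z)
  show ?thesis
    unfolding td_update_def using step_towards_pos[OF alpha Z T] td_target_src_dst_pos[OF assms]
    by simp
qed

lemma fold_td_update_nonneg_pos_diag:
  "nonneg_pos_diag Z \<Longrightarrow> nonneg_pos_diag (fold (\<lambda>t Z. td_update SN lam \<alpha> Z t) ts Z)"
  by (induction ts arbitrary: Z) (simp_all add: td_update_nonneg_pos_diag)

lemma fold_td_update_pos: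
  "nonneg_pos_diag Z \<Longrightarrow> 0 < Z i j \<Longrightarrow> 0 < fold (\<lambda>t Z. td_update SN lam \<alpha> Z t) ts Z i j"
  by (induction ts arbitrary: Z) (simp_all add: td_update_nonneg_pos_diag td_update_pos)

lemma fold_td_update_src_dst_pos:
  assumes "nonneg_pos_diag Z" "t \<in> set ts" "tr_src t \<in> SN"
  shows "0 < fold (\<lambda>t Z. td_update SN lam \<alpha> Z t) ts Z (tr_src t) (tr_dst t)"
  using assms
proof (induction ts arbitrary: Z)
  case (Cons t' ts)
  have Z': "nonneg_pos_diag (td_update SN lam \<alpha> Z t')"
    using Cons.prems(1) by (rule td_update_nonneg_pos_diag)
  show ?case
  proof (cases "t \<in> set ts")
    case True
    then show ?thesis using Cons.IH[OF Z'] Cons.prems(3) by simp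
  next
    case False
    then have "t' = t" using Cons.prems(2) by simp
    then have "0 < td_update SN lam \<alpha> Z t' (tr_src t) (tr_dst t)"
      using td_update_src_dst_pos[OF Cons.prems(1) Cons.prems(3)] by simp
    then show ?thesis using fold_td_update_pos[OF Z'] by simp
  qed
qed simp

lemma backward_sweep_nonneg_pos_diag: "nonneg_pos_diag (backward_sweep SN lam \<alpha> D)"
  unfolding backward_sweep_def by (rule fold_td_update_nonneg_pos_diag[OF nonneg_pos_diag_id_mat])

lemma backward_sweep_src_dst_pos:
  "t \<in> set D \<Longrightarrow> tr_src t \<in> SN \<Longrightarrow> 0 < backward_sweep SN lam \<alpha> D (tr_src t) (tr_dst t)"
  unfolding backward_sweep_def by (rule fold_td_update_src_dst_pos[OF nonneg_pos_diag_id_mat]) simp_all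

end

lemma collected_from_visited_subset:
  assumes data: "collected_from s0 SN r D" and "s0 \<in> W"
    and closed: "\<And>t. t \<in> set D \<Longrightarrow> tr_src t \<in> SN \<Longrightarrow> tr_src t \<in> W \<Longrightarrow> tr_dst t \<in> W"
  shows "visited_states D \<subseteq> W"
proof -
  have dst: "tr_dst (D ! k) \<in> W" if "k < length D" "tr_src (D ! k) \<in> W" for k
    using closed[OF nth_mem[OF \<open>k < length D\<close>]] that data \<open>s0 \<in> W\<close>
    unfolding collected_from_def by metis
  have src: "k < length D \<Longrightarrow> tr_src (D ! k) \<in> W" for k
  proof (induction k)
    case 0
    then show ?case using data \<open>s0 \<in> W\<close> unfolding collected_from_def by simp
  next
    case (Suc k)
    then have "tr_dst (D ! k) \<in> W" using dst by simp
    then show ?case using Suc.prems data \<open>s0 \<in> W\<close> unfolding collected_from_def by metis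
  qed
  show ?thesis
  proof
    fix x assume "x \<in> visited_states D"
    then obtain t where "t \<in> set D" "x = tr_src t \<or> x = tr_dst t"
      unfolding visited_states_def by blast
    moreover from \<open>t \<in> set D\<close> obtain k where "k < length D" "t = D ! k"
      by (metis in_set_conv_nth)
    ultimately show "x \<in> W" using src dst by blast
  qed
qed

lemma collected_from_start_visited:
  "collected_from s0 SN r D \<Longrightarrow> s0 \<in> visited_states D"
  unfolding collected_from_def visited_states_def by (metis UnI1 image_eqI length_greater_0_conv nth_mem)

lemma sym_backward_sweep_connected:
  assumes "0 < \<alpha>" "\<alpha> < 1" and data: "collected_from s0 SN r D" and "s0 \<in> W"
    and closed: "\<And>i j. i \<in> W \<Longrightarrow> j \<in> visited_states D
                   \<Longrightarrow> 0 < sym_mat (backward_sweep SN lam \<alpha> D) i j \<Longrightarrow> j \<in> W"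
  shows "visited_states D \<subseteq> W"
proof (rule collected_from_visited_subset[OF data \<open>s0 \<in> W\<close>])
  fix t assume t: "t \<in> set D" "tr_src t \<in> SN" and "tr_src t \<in> W"
  have "0 < sym_mat (backward_sweep SN lam \<alpha> D) (tr_src t) (tr_dst t)"
    using backward_sweep_src_dst_pos[OF assms(1,2) t, where lam=lam]
      backward_sweep_nonneg_pos_diag[OF assms(1,2), where SN=SN and lam=lam and D=D]
    unfolding sym_mat_def nonneg_pos_diag_def by (simp add: add_pos_nonneg)
  moreover have "tr_dst t \<in> visited_states D" unfolding visited_states_def using t(1) by blast
  ultimately show "tr_dst t \<in> W" using closed \<open>tr_src t \<in> W\<close> by blast
qed

theorem propositionC3:
  fixes SN :: "'s::finite set"
    and r :: "'s \<Rightarrow> real"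
    and lam \<alpha> :: real
    and s0 :: 's
    and D :: "('s, 'act) transition list"
  assumes r_neg: "\<forall>s\<in>SN. r s < 0"
    and lam_pos: "lam > 0"
    and alpha: "0 < \<alpha>" "\<alpha> < 1"
    and data: "collected_from s0 SN r D"
  shows "\<exists>\<mu> v. is_top_eigenpair_on (visited_states D)
                 (sym_mat (backward_sweep SN lam \<alpha> D)) \<mu> v
             \<and> (\<forall>i\<in>visited_states D. v i > 0)"
proof -
  define V where "V = visited_states D"
  define A where "A = sym_mat (backward_sweep SN lam \<alpha> D)"
  have sym: "A i j = A j i" for i j
    unfolding A_def sym_mat_def by simp
  have nonneg: "0 \<le> A i j" for i j
    using backward_sweep_nonneg_pos_diag[OF alpha, where SN=SN and lam=lam and D=D]
    unfolding A_def sym_mat_def nonneg_pos_diag_def by simp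
  have "s0 \<in> V" unfolding V_def by (rule collected_from_start_visited[OF data])
  then have "V \<noteq> {}" by blast
  then obtain \<mu> v where top: "is_top_eigenpair_on V A \<mu> v" and v_nonneg: "\<forall>i\<in>V. 0 \<le> v i"
    by (rule nonneg_symmetric_top_eigenpair[OF _ sym nonneg])
  then have eig: "\<forall>i\<in>V. (\<Sum>j\<in>V. A i j * v j) = \<mu> * v i" and nonzero: "\<exists>i\<in>V. v i \<noteq> 0"
    unfolding is_top_eigenpair_on_def is_eigenpair_on_def by auto
  have connected: "V \<subseteq> W"
    if "s0 \<in> W" "\<And>i j. i \<in> W \<Longrightarrow> j \<in> V \<Longrightarrow> 0 < A i j \<Longrightarrow> j \<in> W" for W
    using sym_backward_sweep_connected[OF alpha data that] unfolding V_def A_def .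
  have "\<forall>i\<in>V. 0 < v i"
    by (rule nonneg_eigenvector_pos_if_connected[OF _ sym nonneg v_nonneg eig nonzero \<open>s0 \<in> V\<close> connected])
      simp
  then show ?thesis using top unfolding V_def A_def by blast
qed

end
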